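(* Let $p:\mathbb{R}^n\to\mathbb{R}$ be a nonzero polynomial of the form $$p(x)=\sum_{l\le |\alpha|\le k} c_\alpha x^\alpha,$$ where $l\ge 1$ is the lowest degree and $k\ge l$ the highest degree of $p$, i.e., $l$ (resp. $k$) is the smallest (resp. largest) integer such that some $\alpha\in\mathbb{N}^n$ with $|\alpha|=l$ (resp. $|\alpha|=k$) has $c_\alpha\neq 0$. Assume that $p(x)\le 0$ for all $x\in\mathbb{R}^n$. Then: \begin{enumerate} \item The degrees $l$ and $k$ are even, and both $p_l(x)=\sum_{|\alpha|=l}c_\alpha x^\alpha$ and $p_k(x)=\sum_{|\alpha|=k}c_\alpha x^\alpha$ are negative semi-definite. \item If a monomial $c_\alpha x^\alpha$ (with $c_\alpha\ne 0$) of $p$ contains a factor $x_i^{\alpha_i}$ whose degree $\alpha_i$ is the highest exponent of $x_i$ among all monomials of $p$, then $\alpha_i$ is even. \item If a monomial $x^\alpha$ appearing in $p_l$ (resp. $p_k$) contains a factor $x_i^{\alpha_i}$ whose degree $\alpha_i$ is the highest exponent of $x_i$ among all monomials of $p_l$ (resp. $p_k$), then $\alpha_i$ is even. \item If a monomial of $p$ has the form $c\,x_i^d$ (a single variable $x_i$ with coefficient $c$) and $d$ is either the lowest or the highest degree among the monomials of $p$ of this form (pure powers of $x_i$), then $d$ is even and $c\le 0$. \end{enumerate}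
   Context: Multi-index notation: for $\alpha=(\alpha_1,\dots,\alpha_n)\in\mathbb{N}^n$ (nonnegative integers), $x^\alpha=x_1^{\alpha_1}\cdots x_n^{\alpha_n}$ and $|\alpha|=\alpha_1+\dots+\alpha_n$. A monomial of $p$ means a term $c_\alpha x^\alpha$ with $c_\alpha\neq 0$. A function $V:\mathbb{R}^n\to\mathbb{R}$ is positive semi-definite if $V(0)=0$ and $V(x)\ge 0$ for all $x$; it is negative semi-definite if $-V$ is positive semi-definite. *)

theory Defs
  imports "HOL-Analysis.Analysis"
begin

text \<open>A real polynomial in n variables (n = CARD('n)) is represented by its coefficient
  function c on multi-indices alpha :: 'n \<Rightarrow> nat, with finite support.\<close>

definition mdeg :: "('n::finite \<Rightarrow> nat) \<Rightarrow> nat" where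
  "mdeg \<alpha> = (\<Sum>i\<in>UNIV. \<alpha> i)"

definition msupp :: "(('n::finite \<Rightarrow> nat) \<Rightarrow> real) \<Rightarrow> ('n \<Rightarrow> nat) set" where
  "msupp c = {\<alpha>. c \<alpha> \<noteq> 0}"

definition monom_val :: "('n::finite \<Rightarrow> nat) \<Rightarrow> real ^ 'n \<Rightarrow> real" where
  "monom_val \<alpha> x = (\<Prod>i\<in>UNIV. (x $ i) ^ (\<alpha> i))"

definition peval :: "(('n::finite \<Rightarrow> nat) \<Rightarrow> real) \<Rightarrow> real ^ 'n \<Rightarrow> real" where
  "peval c x = (\<Sum>\<alpha>\<in>msupp c. c \<alpha> * monom_val \<alpha> x)"

definition lowdeg :: "(('n::finite \<Rightarrow> nat) \<Rightarrow> real) \<Rightarrow> nat" where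
  "lowdeg c = Min (mdeg ` msupp c)"

definition highdeg :: "(('n::finite \<Rightarrow> nat) \<Rightarrow> real) \<Rightarrow> nat" where
  "highdeg c = Max (mdeg ` msupp c)"

definition hpart :: "(('n::finite \<Rightarrow> nat) \<Rightarrow> real) \<Rightarrow> nat \<Rightarrow> ('n \<Rightarrow> nat) \<Rightarrow> real" where
  "hpart c d = (\<lambda>\<alpha>. if mdeg \<alpha> = d then c \<alpha> else 0)"

definition maxexp :: "(('n::finite \<Rightarrow> nat) \<Rightarrow> real) \<Rightarrow> 'n \<Rightarrow> nat" where
  "maxexp c i = Max ((\<lambda>\<beta>. \<beta> i) ` msupp c)"

definition pure_idx :: "'n \<Rightarrow> nat \<Rightarrow> ('n \<Rightarrow> nat)" where
  "pure_idx i d = (\<lambda>j. if j = i then d else 0)"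

definition pure_degs :: "(('n::finite \<Rightarrow> nat) \<Rightarrow> real) \<Rightarrow> 'n \<Rightarrow> nat set" where
  "pure_degs c i = {d. c (pure_idx i d) \<noteq> 0}"

definition psd :: "('a::zero \<Rightarrow> real) \<Rightarrow> bool" where
  "psd V \<longleftrightarrow> V 0 = 0 \<and> (\<forall>x. V x \<ge> 0)"

definition nsd :: "('a::zero \<Rightarrow> real) \<Rightarrow> bool" where
  "nsd V \<longleftrightarrow> psd (\<lambda>x. - V x)"

end

theory Submission
  imports Defs "HOL-Computational_Algebra.Polynomial"
begin

text \<open>Along suitable curves p becomes a univariate sum f(t) of terms b t^e with f \<le> 0.
  Dividing by t^m for the lowest exponent m and letting t tend to 0 from either side shows
  that the coefficient of t^m is \<le> 0 and vanishes when m is odd; applied to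
  t^(2m) f(1/t), the same holds for the highest exponent m. The rays t x pick out the
  homogeneous parts of extreme degree, moving only x_i picks out the monomials of extreme
  x_i-exponent, and the axis t e_i picks out the pure powers of x_i. Since a polynomial
  with a nonzero coefficient does not vanish identically, "vanishes when the exponent is odd"
  becomes "the exponent is even".\<close>

lemma isCont_nonpos_mult_power_at_0:
  fixes h :: "real \<Rightarrow> real"
  assumes cont: "isCont h 0" and sign: "\<And>s. s \<noteq> 0 \<Longrightarrow> h s * s ^ m \<le> 0"
  shows "h 0 \<le> 0" and "odd m \<Longrightarrow> h 0 = 0"
proof -
  have lim_right: "(h \<longlongrightarrow> h 0) (at_right 0)" and lim_left: "(h \<longlongrightarrow> h 0) (at_left 0)"
    using cont by (simp_all add: isCont_def filterlim_at_split)
  have "eventually (\<lambda>s. h s \<le> 0) (at_right 0)"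
    using eventually_at_right_less[of "0::real"]
  proof eventually_elim
    case (elim s)
    then have "s ^ m > 0" by simp
    with sign[of s] elim show ?case by (auto simp: mult_le_0_iff)
  qed
  with lim_right show nonpos: "h 0 \<le> 0"
    by (intro tendsto_upperbound) auto
  assume "odd m"
  have "eventually (\<lambda>s. s < 0) (at_left (0::real))"
    by (simp add: eventually_at_filter)
  then have "eventually (\<lambda>s. h s \<ge> 0) (at_left 0)"
  proof eventually_elim
    case (elim s)
    with \<open>odd m\<close> have "s ^ m < 0" by simp
    with sign[of s] elim show ?case by (auto simp: mult_le_0_iff)
  qed
  with lim_left have "h 0 \<ge> 0"
    by (intro tendsto_lowerbound) auto
  with nonpos show "h 0 = 0" by simp
qed

lemma lowest_exponent_coeff_nonpos:
  fixes b :: "'a \<Rightarrow> real" and k :: "'a \<Rightarrow> nat"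
  assumes fin: "finite A"
    and nonpos: "\<And>t. t \<noteq> 0 \<Longrightarrow> (\<Sum>\<alpha>\<in>A. b \<alpha> * t ^ k \<alpha>) \<le> 0"
    and lowest: "\<And>\<alpha>. \<alpha> \<in> A \<Longrightarrow> m \<le> k \<alpha>"
  shows "(\<Sum>\<alpha>\<in>{\<alpha>\<in>A. k \<alpha> = m}. b \<alpha>) \<le> 0"
    and "odd m \<Longrightarrow> (\<Sum>\<alpha>\<in>{\<alpha>\<in>A. k \<alpha> = m}. b \<alpha>) = 0"
proof -
  define h where "h s = (\<Sum>\<alpha>\<in>A. b \<alpha> * s ^ (k \<alpha> - m))" for s :: real
  have "isCont h 0"
    unfolding h_def by (intro continuous_intros)
  moreover have "h s * s ^ m = (\<Sum>\<alpha>\<in>A. b \<alpha> * s ^ k \<alpha>)" for s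
    unfolding h_def sum_distrib_right
    by (intro sum.cong refl) (simp add: lowest mult.assoc flip: power_add)
  moreover have "h 0 = (\<Sum>\<alpha>\<in>{\<alpha>\<in>A. k \<alpha> = m}. b \<alpha>)"
  proof -
    have "h 0 = (\<Sum>\<alpha>\<in>A. if k \<alpha> = m then b \<alpha> else 0)"
      unfolding h_def by (intro sum.cong refl) (auto simp: power_0_left dest: lowest)
    with fin show ?thesis
      by (simp add: sum.inter_filter)
  qed
  ultimately show "(\<Sum>\<alpha>\<in>{\<alpha>\<in>A. k \<alpha> = m}. b \<alpha>) \<le> 0"
    and "odd m \<Longrightarrow> (\<Sum>\<alpha>\<in>{\<alpha>\<in>A. k \<alpha> = m}. b \<alpha>) = 0"
    using isCont_nonpos_mult_power_at_0[of h m] nonpos by auto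
qed

lemma highest_exponent_coeff_nonpos:
  fixes b :: "'a \<Rightarrow> real" and k :: "'a \<Rightarrow> nat"
  assumes fin: "finite A"
    and nonpos: "\<And>t. t \<noteq> 0 \<Longrightarrow> (\<Sum>\<alpha>\<in>A. b \<alpha> * t ^ k \<alpha>) \<le> 0"
    and highest: "\<And>\<alpha>. \<alpha> \<in> A \<Longrightarrow> k \<alpha> \<le> m"
  shows "(\<Sum>\<alpha>\<in>{\<alpha>\<in>A. k \<alpha> = m}. b \<alpha>) \<le> 0"
    and "odd m \<Longrightarrow> (\<Sum>\<alpha>\<in>{\<alpha>\<in>A. k \<alpha> = m}. b \<alpha>) = 0"
proof -
  have power_reflect: "s ^ (2 * m - k \<alpha>) = s ^ (2 * m) * inverse s ^ k \<alpha>"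
    if "s \<noteq> 0" "\<alpha> \<in> A" for s :: real and \<alpha>
  proof -
    have "k \<alpha> \<le> 2 * m"
      using highest[OF that(2)] by simp
    with that(1) show ?thesis
      by (simp add: power_diff divide_inverse power_inverse)
  qed
  have "(\<Sum>\<alpha>\<in>A. b \<alpha> * s ^ (2 * m - k \<alpha>)) \<le> 0" if "s \<noteq> 0" for s :: real
  proof -
    have "(\<Sum>\<alpha>\<in>A. b \<alpha> * s ^ (2 * m - k \<alpha>)) = s ^ (2 * m) * (\<Sum>\<alpha>\<in>A. b \<alpha> * inverse s ^ k \<alpha>)"
      unfolding sum_distrib_left using that
      by (intro sum.cong refl) (simp only: power_reflect[OF that] mult.left_commute)
    also have "\<dots> \<le> 0"
      using nonpos[of "inverse s"] that by (simp add: mult_nonneg_nonpos power_mult)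
    finally show ?thesis .
  qed
  moreover have "{\<alpha>\<in>A. 2 * m - k \<alpha> = m} = {\<alpha>\<in>A. k \<alpha> = m}"
    using highest by force
  ultimately show "(\<Sum>\<alpha>\<in>{\<alpha>\<in>A. k \<alpha> = m}. b \<alpha>) \<le> 0"
    and "odd m \<Longrightarrow> (\<Sum>\<alpha>\<in>{\<alpha>\<in>A. k \<alpha> = m}. b \<alpha>) = 0"
    using lowest_exponent_coeff_nonpos[OF fin, of b "\<lambda>\<alpha>. 2 * m - k \<alpha>" m] highest by force+
qed

lemma extreme_exponent_coeff_nonpos:
  fixes b :: "'a \<Rightarrow> real" and k :: "'a \<Rightarrow> nat"
  assumes fin: "finite A"
    and nonpos: "\<And>t. t \<noteq> 0 \<Longrightarrow> (\<Sum>\<alpha>\<in>A. b \<alpha> * t ^ k \<alpha>) \<le> 0"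
    and extreme: "(\<forall>\<alpha>\<in>A. m \<le> k \<alpha>) \<or> (\<forall>\<alpha>\<in>A. k \<alpha> \<le> m)"
  shows "(\<Sum>\<alpha>\<in>{\<alpha>\<in>A. k \<alpha> = m}. b \<alpha>) \<le> 0"
    and "odd m \<Longrightarrow> (\<Sum>\<alpha>\<in>{\<alpha>\<in>A. k \<alpha> = m}. b \<alpha>) = 0"
proof -
  from extreme have "(\<Sum>\<alpha>\<in>{\<alpha>\<in>A. k \<alpha> = m}. b \<alpha>) \<le> 0 \<and> (odd m \<longrightarrow> (\<Sum>\<alpha>\<in>{\<alpha>\<in>A. k \<alpha> = m}. b \<alpha>) = 0)"
  proof
    assume "\<forall>\<alpha>\<in>A. m \<le> k \<alpha>"
    then show ?thesis
      using lowest_exponent_coeff_nonpos[OF fin nonpos, of m] by blast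
  next
    assume "\<forall>\<alpha>\<in>A. k \<alpha> \<le> m"
    then show ?thesis
      using highest_exponent_coeff_nonpos[OF fin nonpos, of m] by blast
  qed
  then show "(\<Sum>\<alpha>\<in>{\<alpha>\<in>A. k \<alpha> = m}. b \<alpha>) \<le> 0"
    and "odd m \<Longrightarrow> (\<Sum>\<alpha>\<in>{\<alpha>\<in>A. k \<alpha> = m}. b \<alpha>) = 0"
    by auto
qed

definition vec_upd :: "'a ^ 'n \<Rightarrow> 'n \<Rightarrow> 'a \<Rightarrow> 'a ^ 'n" where
  "vec_upd x i t = (\<chi> j. if j = i then t else x $ j)"

lemma vec_upd_nth_self: "vec_upd x i (x $ i) = x"
  by (simp add: vec_upd_def vec_eq_iff)

lemma monom_val_scaleR: "monom_val \<alpha> (t *\<^sub>R x) = t ^ mdeg \<alpha> * monom_val \<alpha> x"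
  unfolding monom_val_def mdeg_def power_sum
  by (simp add: power_mult_distrib prod.distrib)

lemma monom_val_vec_upd:
  "monom_val \<alpha> (vec_upd x i t) = t ^ \<alpha> i * monom_val \<alpha> (vec_upd x i 1)"
proof -
  have "monom_val \<alpha> (vec_upd x i t) = t ^ \<alpha> i * (\<Prod>j\<in>UNIV - {i}. x $ j ^ \<alpha> j)" for t
    unfolding monom_val_def vec_upd_def
    by (subst prod.remove[of UNIV i]) (auto intro!: prod.cong)
  then show ?thesis by simp
qed

lemma monom_val_axis:
  "monom_val \<alpha> (axis i t) = (if \<alpha> = pure_idx i (\<alpha> i) then t ^ \<alpha> i else 0)"
proof -
  have "monom_val \<alpha> (axis i t) = t ^ \<alpha> i * (\<Prod>j\<in>UNIV - {i}. 0 ^ \<alpha> j)"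
    unfolding monom_val_def axis_def
    by (subst prod.remove[of UNIV i]) (auto intro!: prod.cong)
  also have "(\<Prod>j\<in>UNIV - {i}. (0::real) ^ \<alpha> j) = (if \<alpha> = pure_idx i (\<alpha> i) then 1 else 0)"
    by (auto simp: pure_idx_def fun_eq_iff power_0_left)
  finally show ?thesis by simp
qed

lemma monom_val_0:
  assumes "mdeg \<alpha> \<noteq> 0"
  shows "monom_val \<alpha> (0 :: real ^ 'n::finite) = 0"
proof -
  from assms obtain j where "\<alpha> j \<noteq> 0"
    unfolding mdeg_def by (metis sum.neutral)
  then show ?thesis
    unfolding monom_val_def by auto
qed

lemma msupp_if: "msupp (\<lambda>\<alpha>. if P \<alpha> then c \<alpha> else 0) = {\<alpha>\<in>msupp c. P \<alpha>}"
  by (auto simp: msupp_def)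

lemma peval_if:
  "peval (\<lambda>\<alpha>. if P \<alpha> then c \<alpha> else 0) x = (\<Sum>\<alpha>\<in>{\<alpha>\<in>msupp c. P \<alpha>}. c \<alpha> * monom_val \<alpha> x)"
  unfolding peval_def msupp_if by (intro sum.cong) auto

lemma peval_scaleR: "peval c (t *\<^sub>R x) = (\<Sum>\<alpha>\<in>msupp c. (c \<alpha> * monom_val \<alpha> x) * t ^ mdeg \<alpha>)"
  unfolding peval_def monom_val_scaleR by (simp add: ac_simps)

lemma peval_vec_upd:
  "peval c (vec_upd x i t) = (\<Sum>\<alpha>\<in>msupp c. (c \<alpha> * monom_val \<alpha> (vec_upd x i 1)) * t ^ \<alpha> i)"
  unfolding peval_def by (subst monom_val_vec_upd) (simp add: ac_simps)

lemma sum_powers_eq_0_imp_coeff_eq_0: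
  fixes b :: "'a \<Rightarrow> real" and k :: "'a \<Rightarrow> nat"
  assumes fin: "finite A" and zero: "\<And>t. (\<Sum>\<alpha>\<in>A. b \<alpha> * t ^ k \<alpha>) = 0"
  shows "(\<Sum>\<alpha>\<in>{\<alpha>\<in>A. k \<alpha> = e}. b \<alpha>) = 0"
proof -
  define P where "P = (\<Sum>\<alpha>\<in>A. monom (b \<alpha>) (k \<alpha>))"
  have "poly P t = 0" for t
    using zero by (simp add: P_def poly_sum poly_monom)
  then have "coeff P e = 0"
    using poly_all_0_iff_0 by (metis coeff_0)
  moreover have "coeff P e = (\<Sum>\<alpha>\<in>A. if k \<alpha> = e then b \<alpha> else 0)"
    by (simp add: P_def coeff_sum)
  ultimately show ?thesis
    using fin by (simp add: sum.inter_filter)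
qed

text \<open>Identity theorem: the coordinates outside S are frozen at 1, and the induction frees
  them one at a time, each time extracting a coefficient of a univariate polynomial.\<close>

lemma sum_monom_val_eq_0_imp_fibre_sum_eq_0:
  fixes a :: "('n::finite \<Rightarrow> nat) \<Rightarrow> real"
  assumes "finite S" and "finite A"
    and "\<And>x. (\<And>j. j \<notin> S \<Longrightarrow> x $ j = 1) \<Longrightarrow> (\<Sum>\<alpha>\<in>A. a \<alpha> * monom_val \<alpha> x) = 0"
  shows "(\<Sum>\<alpha>\<in>{\<alpha>\<in>A. \<forall>j\<in>S. \<alpha> j = \<gamma> j}. a \<alpha>) = 0"
  using assms
proof (induction S arbitrary: A rule: finite_induct)
  case empty
  have "monom_val \<alpha> (\<chi> j. 1) = 1" for \<alpha> :: "'n \<Rightarrow> nat"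
    by (simp add: monom_val_def)
  with empty.prems(2)[of "\<chi> j. 1"] show ?case
    by simp
next
  case (insert i S)
  define A' where "A' = {\<alpha>\<in>A. \<alpha> i = \<gamma> i}"
  have "(\<Sum>\<alpha>\<in>A'. a \<alpha> * monom_val \<alpha> x) = 0" if x: "\<And>j. j \<notin> S \<Longrightarrow> x $ j = 1" for x
  proof -
    have x_upd: "vec_upd x i 1 = x"
      using x insert.hyps(2) by (metis vec_upd_nth_self)
    have "(\<Sum>\<alpha>\<in>A. (a \<alpha> * monom_val \<alpha> x) * t ^ \<alpha> i) = 0" for t
    proof -
      have "(\<Sum>\<alpha>\<in>A. a \<alpha> * monom_val \<alpha> (vec_upd x i t)) = 0"
        using insert.prems(2) x by (simp add: vec_upd_def)
      then show ?thesis
        by (simp add: monom_val_vec_upd[of _ x i t] x_upd ac_simps)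
    qed
    from sum_powers_eq_0_imp_coeff_eq_0[OF insert.prems(1) this]
    show ?thesis
      by (simp add: A'_def)
  qed
  with insert.IH[of A'] insert.prems(1)
  have "(\<Sum>\<alpha>\<in>{\<alpha>\<in>A'. \<forall>j\<in>S. \<alpha> j = \<gamma> j}. a \<alpha>) = 0"
    by (simp add: A'_def)
  moreover have "{\<alpha>\<in>A'. \<forall>j\<in>S. \<alpha> j = \<gamma> j} = {\<alpha>\<in>A. \<forall>j\<in>insert i S. \<alpha> j = \<gamma> j}"
    by (auto simp: A'_def)
  ultimately show ?case
    by simp
qed

lemma msupp_eq_empty_if_peval_eq_0:
  assumes fin: "finite (msupp c)" and zero: "\<And>x. peval c x = 0"
  shows "msupp c = {}"
proof (rule ccontr)
  assume "msupp c \<noteq> {}"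
  then obtain \<gamma> where \<gamma>: "\<gamma> \<in> msupp c"
    by blast
  have "(\<Sum>\<alpha>\<in>{\<alpha>\<in>msupp c. \<forall>j\<in>UNIV. \<alpha> j = \<gamma> j}. c \<alpha>) = 0"
    using zero by (intro sum_monom_val_eq_0_imp_fibre_sum_eq_0[OF finite fin]) (simp add: peval_def)
  moreover have "{\<alpha>\<in>msupp c. \<forall>j\<in>UNIV. \<alpha> j = \<gamma> j} = {\<gamma>}"
    using \<gamma> by (auto simp: fun_eq_iff)
  ultimately show False
    using \<gamma> by (simp add: msupp_def)
qed

lemma peval_extreme_hpart_nonpos:
  assumes fin: "finite (msupp c)" and nonpos: "\<forall>x. peval c x \<le> 0"
    and extreme: "(\<forall>\<alpha>\<in>msupp c. d \<le> mdeg \<alpha>) \<or> (\<forall>\<alpha>\<in>msupp c. mdeg \<alpha> \<le> d)"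
  shows "peval (hpart c d) x \<le> 0" and "odd d \<Longrightarrow> peval (hpart c d) x = 0"
proof -
  have "(\<Sum>\<alpha>\<in>msupp c. (c \<alpha> * monom_val \<alpha> x) * t ^ mdeg \<alpha>) \<le> 0" if "t \<noteq> 0" for t
    using nonpos[rule_format, of "t *\<^sub>R x"] by (simp only: peval_scaleR)
  note extreme_part = extreme_exponent_coeff_nonpos[OF fin this extreme]
  have "peval (hpart c d) x = (\<Sum>\<alpha>\<in>{\<alpha>\<in>msupp c. mdeg \<alpha> = d}. c \<alpha> * monom_val \<alpha> x)"
    by (simp add: hpart_def peval_if)
  with extreme_part show "peval (hpart c d) x \<le> 0" and "odd d \<Longrightarrow> peval (hpart c d) x = 0"
    by auto
qed

lemma even_extreme_degree:
  assumes fin: "finite (msupp c)" and nonpos: "\<forall>x. peval c x \<le> 0"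
    and extreme: "(\<forall>\<alpha>\<in>msupp c. d \<le> mdeg \<alpha>) \<or> (\<forall>\<alpha>\<in>msupp c. mdeg \<alpha> \<le> d)"
    and nonempty: "msupp (hpart c d) \<noteq> {}"
  shows "even d"
proof (rule ccontr)
  assume "odd d"
  then have "peval (hpart c d) x = 0" for x
    by (rule peval_extreme_hpart_nonpos(2)[OF fin nonpos extreme])
  then have "msupp (hpart c d) = {}"
    using fin by (intro msupp_eq_empty_if_peval_eq_0) (simp_all add: hpart_def msupp_if)
  with nonempty show False
    by simp
qed

lemma even_extreme_exponent:
  assumes fin: "finite (msupp c)" and nonpos: "\<forall>x. peval c x \<le> 0" and \<alpha>: "\<alpha> \<in> msupp c"
    and extreme: "(\<forall>\<beta>\<in>msupp c. \<alpha> i \<le> \<beta> i) \<or> (\<forall>\<beta>\<in>msupp c. \<beta> i \<le> \<alpha> i)"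
  shows "even (\<alpha> i)"
proof (rule ccontr)
  assume odd: "odd (\<alpha> i)"
  define m where "m = \<alpha> i"
  define c' where "c' = (\<lambda>\<beta>. if \<beta> i = m then c \<beta> else 0)"
  \<comment> \<open>every monomial of c' has x_i-exponent m, so c' vanishes wherever it vanishes at x_i = 1\<close>
  have "peval c' x = 0" for x
  proof -
    have "(\<Sum>\<beta>\<in>msupp c. (c \<beta> * monom_val \<beta> (vec_upd x i 1)) * t ^ \<beta> i) \<le> 0"
      if "t \<noteq> 0" for t
      using nonpos[rule_format, of "vec_upd x i t"] by (simp only: peval_vec_upd)
    from extreme_exponent_coeff_nonpos(2)[OF fin this extreme[folded m_def]] odd
    have slice: "(\<Sum>\<beta>\<in>{\<beta>\<in>msupp c. \<beta> i = m}. c \<beta> * monom_val \<beta> (vec_upd x i 1)) = 0"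
      by (simp add: m_def)
    have "peval c' x = (\<Sum>\<beta>\<in>msupp c'. (c' \<beta> * monom_val \<beta> (vec_upd x i 1)) * (x $ i) ^ \<beta> i)"
      using peval_vec_upd[of c' x i "x $ i"] by (simp add: vec_upd_nth_self)
    also have "\<dots> = (x $ i) ^ m * (\<Sum>\<beta>\<in>{\<beta>\<in>msupp c. \<beta> i = m}. c \<beta> * monom_val \<beta> (vec_upd x i 1))"
      unfolding sum_distrib_left c'_def msupp_if by (intro sum.cong) auto
    finally show ?thesis
      by (simp add: slice)
  qed
  then have "msupp c' = {}"
    using fin by (intro msupp_eq_empty_if_peval_eq_0) (simp_all add: c'_def msupp_if)
  with \<alpha> show False
    unfolding c'_def msupp_if m_def by blast
qed

lemma even_maxexp:
  assumes fin: "finite (msupp c)" and nonpos: "\<forall>x. peval c x \<le> 0"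
    and \<alpha>: "\<alpha> \<in> msupp c" and max: "\<alpha> i = maxexp c i"
  shows "even (\<alpha> i)"
  using fin max by (intro even_extreme_exponent[OF fin nonpos \<alpha>]) (simp add: maxexp_def)

lemma pure_idx_nth_self [simp]: "pure_idx i d i = d"
  by (simp add: pure_idx_def)

lemma inj_pure_idx: "inj (pure_idx i)"
  by (metis injI pure_idx_nth_self)

lemma pure_degs_eq_vimage: "pure_degs c i = pure_idx i -` msupp c"
  by (simp add: pure_degs_def msupp_def)

lemma finite_pure_degs: "finite (msupp c) \<Longrightarrow> finite (pure_degs c i)"
  unfolding pure_degs_eq_vimage by (rule finite_vimageI[OF _ inj_pure_idx])

lemma peval_axis:
  assumes fin: "finite (msupp c)"
  shows "peval c (axis i t) = (\<Sum>d\<in>pure_degs c i. c (pure_idx i d) * t ^ d)"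
proof -
  have "peval c (axis i t) = (\<Sum>\<alpha>\<in>msupp c. if \<alpha> = pure_idx i (\<alpha> i) then c \<alpha> * t ^ \<alpha> i else 0)"
    unfolding peval_def monom_val_axis by (intro sum.cong) auto
  also have "\<dots> = (\<Sum>\<alpha>\<in>{\<alpha>\<in>msupp c. \<alpha> = pure_idx i (\<alpha> i)}. c \<alpha> * t ^ \<alpha> i)"
    using fin by (simp add: sum.inter_filter)
  also have "{\<alpha>\<in>msupp c. \<alpha> = pure_idx i (\<alpha> i)} = pure_idx i ` pure_degs c i"
    unfolding pure_degs_eq_vimage by force
  also have "(\<Sum>\<alpha>\<in>pure_idx i ` pure_degs c i. c \<alpha> * t ^ \<alpha> i) = (\<Sum>d\<in>pure_degs c i. c (pure_idx i d) * t ^ d)"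
    by (simp add: sum.reindex[OF inj_on_subset[OF inj_pure_idx subset_UNIV]])
  finally show ?thesis .
qed

lemma extreme_pure_power_even_nonpos:
  assumes fin: "finite (msupp c)" and nonpos: "\<forall>x. peval c x \<le> 0"
    and d: "d \<in> pure_degs c i" and extreme: "d = Min (pure_degs c i) \<or> d = Max (pure_degs c i)"
  shows "even d \<and> c (pure_idx i d) \<le> 0"
proof -
  have fin_degs: "finite (pure_degs c i)"
    using fin by (rule finite_pure_degs)
  have "(\<Sum>e\<in>pure_degs c i. c (pure_idx i e) * t ^ e) \<le> 0" if "t \<noteq> 0" for t
    using nonpos[rule_format, of "axis i t"] by (simp only: peval_axis[OF fin])
  moreover from extreme have "(\<forall>e\<in>pure_degs c i. d \<le> e) \<or> (\<forall>e\<in>pure_degs c i. e \<le> d)"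
    using fin_degs by auto
  moreover have "{e\<in>pure_degs c i. e = d} = {d}"
    using d by auto
  ultimately have "c (pure_idx i d) \<le> 0" and "odd d \<Longrightarrow> c (pure_idx i d) = 0"
    using extreme_exponent_coeff_nonpos[OF fin_degs, of "\<lambda>e. c (pure_idx i e)" "\<lambda>e. e" d] by auto
  with d show ?thesis
    by (auto simp: pure_degs_def)
qed

lemma peval_hpart_at_0: "d \<noteq> 0 \<Longrightarrow> peval (hpart c d) 0 = 0"
  by (simp add: hpart_def peval_if monom_val_0)

theorem proposition1:
  fixes c :: "('n::finite \<Rightarrow> nat) \<Rightarrow> real"
  assumes fin: "finite (msupp c)"
    and nonzero: "msupp c \<noteq> {}"
    and low_ge1: "lowdeg c \<ge> 1"
    and nonpos: "\<forall>x. peval c x \<le> 0"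
  shows "even (lowdeg c) \<and> even (highdeg c)
         \<and> nsd (peval (hpart c (lowdeg c))) \<and> nsd (peval (hpart c (highdeg c)))
    \<and> (\<forall>\<alpha>\<in>msupp c. \<forall>i. \<alpha> i = maxexp c i \<longrightarrow> even (\<alpha> i))
    \<and> (\<forall>\<alpha>\<in>msupp (hpart c (lowdeg c)). \<forall>i.
           \<alpha> i = maxexp (hpart c (lowdeg c)) i \<longrightarrow> even (\<alpha> i))
    \<and> (\<forall>\<alpha>\<in>msupp (hpart c (highdeg c)). \<forall>i.
           \<alpha> i = maxexp (hpart c (highdeg c)) i \<longrightarrow> even (\<alpha> i))
    \<and> (\<forall>i. \<forall>d\<in>pure_degs c i.
           (d = Min (pure_degs c i) \<or> d = Max (pure_degs c i))
           \<longrightarrow> even d \<and> c (pure_idx i d) \<le> 0)"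
proof -
  define l where "l = lowdeg c"
  define k where "k = highdeg c"
  have lowest: "\<forall>\<alpha>\<in>msupp c. l \<le> mdeg \<alpha>" and highest: "\<forall>\<alpha>\<in>msupp c. mdeg \<alpha> \<le> k"
    using fin by (simp_all add: l_def k_def lowdeg_def highdeg_def)
  have "l \<in> mdeg ` msupp c" and "k \<in> mdeg ` msupp c"
    using fin nonzero by (simp_all add: l_def k_def lowdeg_def highdeg_def)
  then have nonempty: "msupp (hpart c l) \<noteq> {}" "msupp (hpart c k) \<noteq> {}"
    by (auto simp: hpart_def msupp_if)
  have fin_hpart: "finite (msupp (hpart c d))" for d
    using fin by (simp add: hpart_def msupp_if)
  have nonpos_l: "\<forall>x. peval (hpart c l) x \<le> 0" and nonpos_k: "\<forall>x. peval (hpart c k) x \<le> 0"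
    using peval_extreme_hpart_nonpos(1)[OF fin nonpos] lowest highest by blast+
  have "l \<noteq> 0" and "k \<noteq> 0"
    using low_ge1 lowest highest nonzero by (force simp: l_def)+
  then have "nsd (peval (hpart c l))" and "nsd (peval (hpart c k))"
    using nonpos_l nonpos_k by (simp_all add: nsd_def psd_def peval_hpart_at_0)
  moreover have "even l" and "even k"
    using even_extreme_degree[OF fin nonpos] lowest highest nonempty by blast+
  ultimately show ?thesis
    using even_maxexp[OF fin nonpos] even_maxexp[OF fin_hpart nonpos_l] even_maxexp[OF fin_hpart nonpos_k]
      extreme_pure_power_even_nonpos[OF fin nonpos]
    unfolding l_def k_def by blast
qed

end
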